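(* For every $\varepsilon>0$ and every deterministic strategy $A$ for the Canadian Traveller Problem, there exist a unit-weighted outerplanar graph $G$, vertices $s,t$ of $G$, and a set of edges $E_*$ such that $(G,E_* )$ is a road map and the competitive ratio of $A$ on $(G,E_* )$ is greater than $9-\varepsilon$. In other words, no deterministic strategy achieves competitive ratio $9-\varepsilon$ on all road maps $(G,E_* )$ with $G$ a unit-weighted outerplanar graph (with no restriction on the number $k$ of blocked edges).
   Context: The $k$-Canadian Traveller Problem ($k$-CTP): we are given an undirected connected graph $G=(V,E,\omega)$ with weights $\omega:E\to\mathbb{Q}^+$, a source $s\in V$ and a target $t\in V$, and a hidden set $E_*\subsetneq E$ of blocked edges with $|E_*|\le k$. The pair $(G,E_* )$ is a road map if $s$ and $t$ are connected in $G\setminus E_*$; only road maps are considered. A traveller starts at $s$ and must reach $t$. Initially $E_*$ is unknown; the traveller learns whether an edge is blocked exactly when he visits one of its endpoints. A (deterministic) strategy is an online algorithm which, given $G$, $\omega$, $s$, $t$, $k$, the sequence of vertices visited so far and the set of blocked edges revealed so far, chooses the next vertex, a neighbour of the current vertex through an edge not known to be blocked. The cost of the resulting $(s,t)$-walk is the sum of the weights of the traversed edges (with multiplicity). The competitive ratio of $A$ on $(G,E_* )$ is this cost divided by $d_{E_*}(s,t)$, the length of a shortest $(s,t)$-path in $G\setminus E_*$. A graph is unit-weighted if every edge has weight $1$, and outerplanar if it admits a planar embedding with all vertices on the outer face. *)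

theory Defs
  imports "HOL-Analysis.Analysis"
begin

definition wf_graph :: "nat set \<Rightarrow> nat set set \<Rightarrow> bool" where
  "wf_graph V E \<longleftrightarrow> finite V \<and> (\<forall>e\<in>E. \<exists>u v. e = {u, v} \<and> u \<in> V \<and> v \<in> V \<and> u \<noteq> v)"

definition is_walk :: "nat set set \<Rightarrow> nat list \<Rightarrow> bool" where
  "is_walk F p \<longleftrightarrow> p \<noteq> [] \<and> (\<forall>i. Suc i < length p \<longrightarrow> {p ! i, p ! Suc i} \<in> F)"

definition walk_cost :: "(nat set \<Rightarrow> rat) \<Rightarrow> nat list \<Rightarrow> rat" where
  "walk_cost w p = (\<Sum>i < length p - 1. w {p ! i, p ! Suc i})"

definition connected_in :: "nat set set \<Rightarrow> nat \<Rightarrow> nat \<Rightarrow> bool" where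
  "connected_in F u v \<longleftrightarrow> (\<exists>p. is_walk F p \<and> hd p = u \<and> last p = v)"

definition connected_graph :: "nat set \<Rightarrow> nat set set \<Rightarrow> bool" where
  "connected_graph V E \<longleftrightarrow> (\<forall>u\<in>V. \<forall>v\<in>V. connected_in E u v)"

definition blocked_dist :: "nat set set \<Rightarrow> (nat set \<Rightarrow> rat) \<Rightarrow> nat set set \<Rightarrow> nat \<Rightarrow> nat \<Rightarrow> real" where
  "blocked_dist E w Es s t =
     Inf {real_of_rat (walk_cost w p) | p. is_walk (E - Es) p \<and> hd p = s \<and> last p = t}"

definition road_map :: "nat set \<Rightarrow> nat set set \<Rightarrow> nat \<Rightarrow> nat \<Rightarrow> nat \<Rightarrow> nat set set \<Rightarrow> bool" where
  "road_map V E s t k Es \<longleftrightarrow> wf_graph V E \<and> connected_graph V E \<and> s \<in> V \<and> t \<in> V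
     \<and> Es \<subset> E \<and> card Es \<le> k \<and> connected_in (E - Es) s t"

text \<open>A deterministic strategy: given V, E, weights, s, t, k, the sequence of visited
  vertices and the set of revealed blocked edges, it returns the next vertex.\<close>
type_synonym strategy =
  "nat set \<Rightarrow> nat set set \<Rightarrow> (nat set \<Rightarrow> rat) \<Rightarrow> nat \<Rightarrow> nat \<Rightarrow> nat \<Rightarrow> nat list \<Rightarrow> nat set set \<Rightarrow> nat"

definition revealed :: "nat set set \<Rightarrow> nat list \<Rightarrow> nat set set" where
  "revealed Es vs = {e \<in> Es. \<exists>v\<in>set vs. v \<in> e}"

fun run :: "strategy \<Rightarrow> nat set \<Rightarrow> nat set set \<Rightarrow> (nat set \<Rightarrow> rat) \<Rightarrow> nat \<Rightarrow> nat \<Rightarrow> nat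
             \<Rightarrow> nat set set \<Rightarrow> nat \<Rightarrow> nat list" where
  "run A V E w s t k Es 0 = [s]"
| "run A V E w s t k Es (Suc n) =
     (let vs = run A V E w s t k Es n in
      if last vs = t then vs else vs @ [A V E w s t k vs (revealed Es vs)])"

definition valid_strategy :: "strategy \<Rightarrow> bool" where
  "valid_strategy A \<longleftrightarrow>
    (\<forall>V E w s t k Es n. road_map V E s t k Es \<and> (\<forall>e\<in>E. w e > 0) \<longrightarrow>
       (let vs = run A V E w s t k Es n in
        last vs \<noteq> t \<longrightarrow>
          {last vs, A V E w s t k vs (revealed Es vs)} \<in> E - revealed Es vs))"

text \<open>Outerplanarity: there is a planar drawing in the plane (identified with complex)
  with vertices as distinct points, edges as arcs meeting only at common endpoints,
  and every vertex lying on the boundary of the outer (unbounded) face.\<close>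
definition outerplanar :: "nat set \<Rightarrow> nat set set \<Rightarrow> bool" where
  "outerplanar V E \<longleftrightarrow>
    (\<exists>(f :: nat \<Rightarrow> complex) (\<gamma> :: nat set \<Rightarrow> real \<Rightarrow> complex).
       inj_on f V
     \<and> (\<forall>e\<in>E. arc (\<gamma> e) \<and> {pathstart (\<gamma> e), pathfinish (\<gamma> e)} = f ` e
              \<and> path_image (\<gamma> e) \<inter> f ` V = f ` e)
     \<and> (\<forall>e\<in>E. \<forall>e'\<in>E. e \<noteq> e' \<longrightarrow> path_image (\<gamma> e) \<inter> path_image (\<gamma> e') \<subseteq> f ` (e \<inter> e'))
     \<and> (let D = f ` V \<union> (\<Union>e\<in>E. path_image (\<gamma> e)) in
        \<exists>C \<in> components (- D). \<not> bounded C \<and> f ` V \<subseteq> closure C))"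

end

theory Submission
  imports Defs
begin

(* Put s in the middle of a path with 2N + 1 vertices and join every path vertex by a spoke to t;
   this fan is outerplanar.  In the instance indexed by j all spokes are blocked except the one at
   distance j from s along the path, so d(s, t) <= |j| + 1, and a spoke is seen to be open only by
   visiting its path end.  Hence, until it finds the open spoke, a deterministic strategy walks
   along the path in the same way for every j, and a ratio below 9 - eps on every instance would
   make this walk a linear search on the integers (the cow path) finding each target j, |j| <= N,
   by time (9 - eps)(|j| + 1).  The classical lower bound rules this out: if x k is the total depth
   of the first k turns of the walk, then x (k + 2) <= (4 - eps/2)(x (k + 1) - x k + 2), and such a
   sequence cannot keep increasing for more than O(1/eps) turns; as every turn goes at most five
   times deeper than the previous one, N = 2 * 5^O(1/eps) leaves room for all of them. *)

section \<open>Slowly growing sequences\<close>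

(* With c = (C - 1)/2, the turning depths of a linear search with ratio C satisfy this recurrence. *)
definition slow_sequence :: "real \<Rightarrow> nat \<Rightarrow> (nat \<Rightarrow> real) \<Rightarrow> bool" where
  "slow_sequence c K x \<longleftrightarrow> 0 \<le> x 0 \<and> (\<forall>k<K. x k + 1 \<le> x (Suc k))
     \<and> (\<forall>k. k + 2 \<le> K \<longrightarrow> x (k + 2) \<le> c * (x (k + 1) - x k + 2))"

lemma slow_sequence_increment:
  "slow_sequence c K x \<Longrightarrow> k < K \<Longrightarrow> x k + 1 \<le> x (Suc k)"
  unfolding slow_sequence_def by blast

lemma slow_sequence_recurrence:
  "slow_sequence c K x \<Longrightarrow> k + 2 \<le> K \<Longrightarrow> x (k + 2) \<le> c * (x (k + 1) - x k + 2)"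
  unfolding slow_sequence_def by blast

lemma slow_sequence_lower_bound:
  assumes "slow_sequence c K x" "k \<le> K"
  shows "x 0 + real k \<le> x k"
  using assms(2)
proof (induction k)
  case (Suc k)
  then have "x k + 1 \<le> x (Suc k)" using slow_sequence_increment[OF assms(1)] by simp
  then show ?case using Suc by simp
qed simp

lemma slow_sequence_shift:
  assumes "slow_sequence c K x" "j + L \<le> K"
  shows "slow_sequence c L (\<lambda>k. x (k + j))"
proof -
  have "0 \<le> x j" using slow_sequence_lower_bound[OF assms(1), of j] assms unfolding slow_sequence_def by simp
  then show ?thesis using assms unfolding slow_sequence_def by (auto simp: add.assoc [symmetric])
qed

lemma slow_sequence_snoc:
  assumes "slow_sequence c k x" "x k + 1 \<le> v" "\<And>j. k = Suc j \<Longrightarrow> v \<le> c * (x k - x j + 2)"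
  shows "slow_sequence c (Suc k) (x(Suc k := v))"
  using assms unfolding slow_sequence_def
  by (auto simp: less_Suc_eq le_Suc_eq numeral_2_eq_2)

lemma ratio_decrease_step:
  fixes \<epsilon> a b \<rho> :: real
  assumes \<epsilon>: "0 < \<epsilon>" "\<epsilon> \<le> 1" and a: "128 / \<epsilon> \<le> a" and ab: "a < b" "b \<le> \<rho> * a"
  shows "(4 - \<epsilon>/2) * (b - a + 2) \<le> (\<rho> - \<epsilon>/16) * b"
proof -
  define c where "c = 4 - \<epsilon>/2"
  have a0: "0 < a" using a \<epsilon> by (smt (verit) divide_pos_pos)
  \<comment> \<open>the only place where c < 4 is used\<close>
  have "(c + \<epsilon>/8)\<^sup>2 \<le> 4 * c"
    using \<epsilon> mult_left_le[of \<epsilon> \<epsilon>] unfolding c_def by (simp add: power2_eq_square algebra_simps)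
  then have "((c + \<epsilon>/8)\<^sup>2 / 4 - c) * a\<^sup>2 \<le> 0"
    by (intro mult_nonpos_nonneg) auto
  moreover have "c * (b - a) * a - (b\<^sup>2 - \<epsilon> * b * a / 8)
      = ((c + \<epsilon>/8)\<^sup>2 / 4 - c) * a\<^sup>2 - (b - (c + \<epsilon>/8) / 2 * a)\<^sup>2"
    by (simp add: power2_eq_square algebra_simps)
  ultimately have quadratic: "c * (b - a) * a \<le> b\<^sup>2 - \<epsilon> * b * a / 8"
    by (smt (verit) zero_le_power2)
  have "128 \<le> \<epsilon> * a" using a \<epsilon> by (simp add: field_simps)
  moreover have "\<epsilon> * a \<le> \<epsilon> * b" using ab \<epsilon> by simp
  ultimately have "2 * c \<le> \<epsilon> * b / 16" using \<epsilon> unfolding c_def by argo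
  then have linear: "2 * c * a \<le> \<epsilon> * b * a / 16"
    using mult_right_mono[of "2 * c" "\<epsilon> * b / 16" a] a0 by simp
  have "b\<^sup>2 \<le> \<rho> * a * b"
    using ab a0 mult_right_mono[OF ab(2), of b] by (simp add: power2_eq_square)
  moreover have "c * (b - a + 2) * a = c * (b - a) * a + 2 * c * a"
    by (simp add: algebra_simps)
  moreover have "(\<rho> - \<epsilon>/16) * b * a = \<rho> * a * b - \<epsilon> * b * a / 16"
    by (simp add: algebra_simps)
  ultimately have "c * (b - a + 2) * a \<le> (\<rho> - \<epsilon>/16) * b * a"
    using quadratic linear by linarith
  then show ?thesis using a0 unfolding c_def by simp
qed

lemma slow_sequence_ratio_descent:
  assumes \<epsilon>: "0 < \<epsilon>" "\<epsilon> \<le> 1"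
    and "slow_sequence (4 - \<epsilon>/2) (Suc K) x" "128 / \<epsilon> \<le> x 0" "x 1 \<le> (1 + \<epsilon>/16 * K) * x 0"
  shows False
  using assms(3-)
proof (induction K arbitrary: x)
  case 0
  then have "x 0 + 1 \<le> x 1" using slow_sequence_increment by fastforce
  then show ?case using 0 by simp
next
  case (Suc K)
  have "x 0 + 1 \<le> x 1" "x 1 + 1 \<le> x 2"
    using slow_sequence_increment[OF Suc.prems(1), of 0] slow_sequence_increment[OF Suc.prems(1), of 1]
    by (simp_all add: numeral_2_eq_2)
  then have inc: "x 0 < x 1" "x 1 < x 2" by simp_all
  have "x 2 \<le> (4 - \<epsilon>/2) * (x 1 - x 0 + 2)"
    using slow_sequence_recurrence[OF Suc.prems(1), of 0] by (simp add: numeral_2_eq_2)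
  also have "\<dots> \<le> (1 + \<epsilon>/16 * real (Suc K) - \<epsilon>/16) * x 1"
    using ratio_decrease_step[OF \<epsilon> Suc.prems(2) inc(1) Suc.prems(3)] .
  also have "1 + \<epsilon>/16 * real (Suc K) - \<epsilon>/16 = 1 + \<epsilon>/16 * K"
    by (simp add: algebra_simps)
  finally have "x 2 \<le> (1 + \<epsilon>/16 * K) * x 1" .
  moreover have "slow_sequence (4 - \<epsilon>/2) (Suc K) (\<lambda>k. x (k + 1))"
    using slow_sequence_shift[OF Suc.prems(1), of 1 "Suc K"] by simp
  moreover have "128 / \<epsilon> \<le> x 1" using Suc.prems(2) inc by simp
  ultimately show False
    using Suc.IH[of "\<lambda>k. x (k + 1)"] by (simp add: numeral_2_eq_2)
qed

(* After 128/eps increments x is large enough for ratio_decrease_step, and x (k + 1) <= 8 * x k;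
   each further step lowers this ratio bound by eps/16, so after 112/eps steps x stops increasing. *)
lemma no_slow_sequence:
  assumes \<epsilon>: "0 < \<epsilon>" "\<epsilon> \<le> 1" and K: "nat \<lceil>128/\<epsilon>\<rceil> + nat \<lceil>112/\<epsilon>\<rceil> + 3 \<le> K"
  shows "\<not> slow_sequence (4 - \<epsilon>/2) K x"
proof
  assume slow: "slow_sequence (4 - \<epsilon>/2) K x"
  define i where "i = nat \<lceil>128/\<epsilon>\<rceil> + 1"
  define L where "L = nat \<lceil>112/\<epsilon>\<rceil>"
  have "0 \<le> x 0" using slow unfolding slow_sequence_def by simp
  then have "real i \<le> x i" "real (Suc i) \<le> x (Suc i)"
    using slow_sequence_lower_bound[OF slow, of i] slow_sequence_lower_bound[OF slow, of "Suc i"] K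
    unfolding i_def by simp_all
  moreover have "128/\<epsilon> \<le> real (nat \<lceil>128/\<epsilon>\<rceil>)" by linarith
  ultimately have x_i: "0 \<le> x i" and x_Suc_i: "128/\<epsilon> + 2 \<le> x (Suc i)" unfolding i_def by simp_all
  have "x (Suc (Suc i)) \<le> (4 - \<epsilon>/2) * (x (Suc i) - x i + 2)"
    using slow_sequence_recurrence[OF slow, of i] K unfolding i_def by simp
  also have "\<dots> \<le> 4 * (x (Suc i) + 2)"
    using slow_sequence_increment[OF slow, of i] K x_i \<epsilon> unfolding i_def
    by (intro order_trans[OF mult_right_mono[of "4 - \<epsilon>/2" 4]]) auto
  also have "\<dots> \<le> 8 * x (Suc i)"
    using x_Suc_i \<epsilon> by (smt (verit) divide_nonneg_pos)
  also have "\<dots> \<le> (1 + \<epsilon>/16 * L) * x (Suc i)"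
  proof (rule mult_right_mono)
    have "112/\<epsilon> \<le> real L" unfolding L_def by linarith
    then show "8 \<le> 1 + \<epsilon>/16 * L" using \<epsilon> by (simp add: field_simps)
  qed (use x_Suc_i \<epsilon> in \<open>smt (verit) divide_nonneg_pos\<close>)
  finally have "x (Suc (Suc i)) \<le> (1 + \<epsilon>/16 * L) * x (Suc i)" .
  moreover have "slow_sequence (4 - \<epsilon>/2) (Suc L) (\<lambda>k. x (k + Suc i))"
    using slow_sequence_shift[OF slow, of "Suc i" "Suc L"] K unfolding i_def L_def by simp
  ultimately show False
    using slow_sequence_ratio_descent[OF \<epsilon>, of L "\<lambda>k. x (k + Suc i)"] x_Suc_i by simp
qed

section \<open>Linear search on the integers\<close>

definition first_visit :: "(nat \<Rightarrow> int) \<Rightarrow> int \<Rightarrow> nat" where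
  "first_visit W j = (LEAST n. W n = j)"

abbreviation search_target :: "nat \<Rightarrow> int \<Rightarrow> bool" where
  "search_target M j \<equiv> 1 \<le> \<bar>j\<bar> \<and> \<bar>j\<bar> \<le> int M"

(* The +1 on both sides of the deadline pays for the final spoke of the fan; unit steps are
   required only while some target is still unvisited. *)
definition competitive_search :: "nat \<Rightarrow> real \<Rightarrow> (nat \<Rightarrow> int) \<Rightarrow> bool" where
  "competitive_search M C W \<longleftrightarrow> W 0 = 0
     \<and> (\<forall>n. (\<exists>j. search_target M j \<and> j \<notin> W ` {..n}) \<longrightarrow> \<bar>W (Suc n) - W n\<bar> = 1)
     \<and> (\<forall>j. search_target M j \<longrightarrow> (\<exists>n. W n = j \<and> real n + 1 \<le> C * (real_of_int \<bar>j\<bar> + 1)))"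

lemma competitive_search_uminus:
  assumes cs: "competitive_search M C W"
  shows "competitive_search M C (\<lambda>n. - W n)"
  unfolding competitive_search_def
proof (intro conjI allI impI)
  show "- W 0 = 0" using cs unfolding competitive_search_def by simp
next
  fix n assume "\<exists>j. search_target M j \<and> j \<notin> (\<lambda>n. - W n) ` {..n}"
  then obtain j where "search_target M (- j)" "- j \<notin> W ` {..n}" by force
  then have "\<bar>W (Suc n) - W n\<bar> = 1" using cs unfolding competitive_search_def by blast
  then show "\<bar>- W (Suc n) - - W n\<bar> = 1" by linarith
next
  fix j :: int assume "search_target M j"
  then have "search_target M (- j)" by simp
  then have "\<exists>n. W n = - j \<and> real n + 1 \<le> C * (real_of_int \<bar>- j\<bar> + 1)"
    using cs unfolding competitive_search_def by blast
  then show "\<exists>n. - W n = j \<and> real n + 1 \<le> C * (real_of_int \<bar>j\<bar> + 1)" by force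
qed

lemma first_visit_le: "W n = j \<Longrightarrow> first_visit W j \<le> n"
  unfolding first_visit_def by (rule Least_le)

lemma not_before_first_visit: "n < first_visit W j \<Longrightarrow> W n \<noteq> j"
  unfolding first_visit_def by (rule not_less_Least)

lemma first_visit_uminus: "first_visit (\<lambda>n. - W n) j = first_visit W (- j)"
  unfolding first_visit_def by (metis minus_equation_iff)

lemma
  assumes "competitive_search M C W" "search_target M j"
  shows first_visit_eq: "W (first_visit W j) = j"
    and first_visit_time: "real (first_visit W j) + 1 \<le> C * (real_of_int \<bar>j\<bar> + 1)"
proof -
  obtain n where n: "W n = j" "real n + 1 \<le> C * (real_of_int \<bar>j\<bar> + 1)"
    using assms unfolding competitive_search_def by blast
  show "W (first_visit W j) = j"
    unfolding first_visit_def using n(1) by (rule LeastI)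
  show "real (first_visit W j) + 1 \<le> C * (real_of_int \<bar>j\<bar> + 1)"
    using first_visit_le[of W n j] n by linarith
qed

lemma unit_step_before_first_visit:
  assumes "competitive_search M C W" "search_target M j" "n < first_visit W j"
  shows "\<bar>W (Suc n) - W n\<bar> = 1"
proof -
  have "j \<notin> W ` {..n}"
  proof
    assume "j \<in> W ` {..n}"
    then obtain i where "i \<le> n" "W i = j" by auto
    then show False using first_visit_le[of W i j] assms(3) by simp
  qed
  then show ?thesis using assms(1,2) unfolding competitive_search_def by blast
qed

lemma displacement_before_first_visit:
  assumes "competitive_search M C W" "search_target M j" "m \<le> n" "n \<le> first_visit W j"
  shows "\<bar>W n - W m\<bar> \<le> int (n - m)"
  using assms(3,4)
proof (induction n rule: dec_induct)
  case (step n)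
  then show ?case
    using unit_step_before_first_visit[OF assms(1,2), of n] by (simp add: Suc_diff_le)
qed simp

lemma first_visit_mono:
  assumes cs: "competitive_search M C W" and "1 \<le> a" "a \<le> b" "b \<le> int M"
  shows "first_visit W a \<le> first_visit W b"
proof -
  have "\<forall>i<first_visit W b. \<bar>W (i + 1) - W i\<bar> \<le> 1"
    using unit_step_before_first_visit[OF cs, of b] assms by fastforce
  moreover have "W 0 \<le> a" "a \<le> W (first_visit W b)"
    using cs first_visit_eq[OF cs, of b] assms unfolding competitive_search_def by auto
  ultimately obtain i where "i \<le> first_visit W b" "W i = a"
    using nat0_intermed_int_val[of "first_visit W b" W a] by auto
  then show ?thesis using first_visit_le[of W i a] by simp
qed

lemma competitive_search_turn:
  assumes cs: "competitive_search M C W" and d: "1 \<le> d" "d \<le> M" and e: "e + 1 \<le> M"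
    and before: "first_visit W (int d) < first_visit W (- int (e + 1))"
  obtains e' where "d \<le> e'"
    "first_visit W (int d) + 2 * e' + e + 1 \<le> first_visit W (- int (e + 1)) + d"
    "e' + 1 \<le> M \<Longrightarrow> first_visit W (- int (e + 1)) < first_visit W (int (e' + 1))"
proof -
  define t where "t = first_visit W (int d)"
  define t' where "t' = first_visit W (- int (e + 1))"
  define A where "A = {a. d \<le> a \<and> a \<le> M \<and> first_visit W (int a) < t'}"
  \<comment> \<open>the deepest point reached on the positive side before the turn\<close>
  define e' where "e' = Max A"
  have "d \<in> A" using d before unfolding A_def t'_def by simp
  moreover have "finite A" unfolding A_def by (rule finite_subset[of _ "{..M}"]) auto
  ultimately have "e' \<in> A" and e'_max: "\<And>a. a \<in> A \<Longrightarrow> a \<le> e'"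
    unfolding e'_def using Max_in Max_ge by blast+
  then have e': "d \<le> e'" "e' \<le> M" "first_visit W (int e') < t'" unfolding A_def by auto
  define u where "u = first_visit W (int e')"
  have W_t: "W t = int d" and W_u: "W u = int e'" and W_t': "W t' = - int (e + 1)"
    using first_visit_eq[OF cs] d e e' unfolding t_def u_def t'_def by auto
  have "t \<le> u" "u < t'"
    using first_visit_mono[OF cs, of "int d" "int e'"] d e' unfolding t_def u_def by simp_all
  have "\<bar>W t' - W u\<bar> \<le> int (t' - u)"
    using displacement_before_first_visit[OF cs, of "- int (e + 1)" u t'] e \<open>u < t'\<close>
    unfolding t'_def by simp
  moreover have "\<bar>W u - W t\<bar> \<le> int (u - t)"
    using displacement_before_first_visit[OF cs, of "int e'" t u] d e' \<open>t \<le> u\<close>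
    unfolding u_def by simp
  ultimately have "t + 2 * e' + e + 1 \<le> t' + d"
    using W_t W_u W_t' \<open>t \<le> u\<close> \<open>u < t'\<close> by linarith
  moreover have "t' < first_visit W (int (e' + 1))" if "e' + 1 \<le> M"
  proof -
    have "e' + 1 \<notin> A" using e'_max by fastforce
    then have "t' \<le> first_visit W (int (e' + 1))" using e' that unfolding A_def by auto
    moreover have "W (first_visit W (int (e' + 1))) \<noteq> W t'"
      using first_visit_eq[OF cs, of "int (e' + 1)"] W_t' that by simp
    ultimately show ?thesis using le_neq_implies_less by blast
  qed
  ultimately show thesis using that e' unfolding t_def t'_def by blast
qed

(* At time t the walk first reaches d > 0, without having reached -(e + 1) yet; S is the total depth
   of the earlier turns, each of which was walked out and back before t. *)
definition turning_state :: "nat \<Rightarrow> real \<Rightarrow> (nat \<Rightarrow> int) \<Rightarrow> nat \<Rightarrow> nat \<Rightarrow> nat \<Rightarrow> real \<Rightarrow> bool" where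
  "turning_state M C W d e t S \<longleftrightarrow> competitive_search M C W \<and> 1 \<le> d \<and> d \<le> M
     \<and> t = first_visit W (int d) \<and> (e + 1 \<le> M \<longrightarrow> t < first_visit W (- int (e + 1)))
     \<and> 2 * S + real d \<le> real t"

lemma turning_state_initial:
  assumes cs: "competitive_search M C W" and M: "1 \<le> M"
  obtains V where "turning_state M C V 1 0 1 0"
proof -
  have "search_target M 1 \<and> 1 \<notin> W ` {..0}" using cs M unfolding competitive_search_def by simp
  then have "\<bar>W 1 - W 0\<bar> = 1" using cs unfolding competitive_search_def One_nat_def by blast
  moreover have W0: "W 0 = 0" using cs unfolding competitive_search_def by simp
  ultimately have "W 1 = 1 \<or> - W 1 = 1" by auto
  obtain V where V: "competitive_search M C V" "V 0 = 0" "V 1 = 1"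
  proof (cases "W 1 = 1")
    case True
    then show thesis using that cs W0 by blast
  next
    case False
    then have "- W 1 = 1" using \<open>W 1 = 1 \<or> - W 1 = 1\<close> by simp
    then show thesis using that[of "\<lambda>n. - W n"] competitive_search_uminus[OF cs] W0 by simp
  qed
  have "first_visit V 1 = 1"
    using first_visit_le[of V 1 1] first_visit_eq[OF V(1), of 1] V M by (cases "first_visit V 1") auto
  moreover have "V (first_visit V (- 1)) = - 1" using first_visit_eq[OF V(1), of "- 1"] M by simp
  then have "1 < first_visit V (- 1)"
    using V by (metis less_one nat_neq_iff one_neq_neg_one zero_neq_neg_one)
  ultimately show thesis using that[of V] V(1) M unfolding turning_state_def by simp
qed

lemma turning_state_next:
  assumes st: "turning_state M C W d e t S" and e: "e + 1 \<le> M"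
  obtains e' t' where "turning_state M C (\<lambda>n. - W n) (e + 1) e' t' (S + real e')" "1 \<le> e'"
    "S + real e' \<le> (C - 1) / 2 * (real e + 2)"
proof -
  have cs: "competitive_search M C W" and d: "1 \<le> d" "d \<le> M" and t: "t = first_visit W (int d)"
    and before: "t < first_visit W (- int (e + 1))" and S: "2 * S + real d \<le> real t"
    using st e unfolding turning_state_def by auto
  obtain e' where e': "d \<le> e'" "t + 2 * e' + e + 1 \<le> first_visit W (- int (e + 1)) + d"
    and next_before: "e' + 1 \<le> M \<Longrightarrow> first_visit W (- int (e + 1)) < first_visit W (int (e' + 1))"
    using competitive_search_turn[OF cs d e] before t by blast
  define t' where "t' = first_visit W (- int (e + 1))"
  have "real t' + 1 \<le> C * (real e + 2)"
    using first_visit_time[OF cs, of "- int (e + 1)"] e unfolding t'_def by (simp add: add.commute)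
  moreover have "real (t + 2 * e' + e + 1) \<le> real (t' + d)"
    using e'(2) unfolding t'_def by (simp only: of_nat_le_iff)
  then have "2 * (S + real e') + real (e + 1) \<le> real t'"
    using S by simp
  ultimately have "S + real e' \<le> (C - 1) / 2 * (real e + 2)"
    by (simp add: field_simps)
  moreover have "turning_state M C (\<lambda>n. - W n) (e + 1) e' t' (S + real e')"
    unfolding turning_state_def first_visit_uminus
    using competitive_search_uminus[OF cs] e next_before \<open>2 * (S + real e') + real (e + 1) \<le> real t'\<close>
    unfolding t'_def by (auto simp: add.commute)
  ultimately show thesis using that e' d by simp
qed

lemma turning_sequence:
  assumes cs: "competitive_search M C W" and C: "C \<le> 9" and M: "2 * 5 ^ K \<le> M"
  shows "\<exists>x. slow_sequence ((C - 1) / 2) K x"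
proof -
  define c where "c = (C - 1) / 2"
  have "\<exists>V d e t x. slow_sequence c k x \<and> turning_state M C V d e t (x k)
      \<and> (\<forall>j. k = Suc j \<longrightarrow> x k = x j + real e) \<and> e + 2 \<le> 2 * 5 ^ k" if "k \<le> K" for k
    using that
  proof (induction k)
    case 0
    have "(1::nat) \<le> 2 * 5 ^ K" by simp
    then obtain V where "turning_state M C V 1 0 1 0"
      using turning_state_initial[OF cs] M by (meson le_trans)
    moreover have "slow_sequence c 0 (\<lambda>_. 0)" unfolding slow_sequence_def by simp
    ultimately show ?case by fastforce
  next
    case (Suc k)
    then obtain V d e t x where x: "slow_sequence c k x" and st: "turning_state M C V d e t (x k)"
      and last_turn: "\<forall>j. k = Suc j \<longrightarrow> x k = x j + real e" and e: "e + 2 \<le> 2 * 5 ^ k"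
      by auto
    have "5 ^ k \<le> (5::nat) ^ K" using Suc.prems by (intro power_increasing) auto
    then have "e + 1 \<le> M" using e M by linarith
    then obtain e' t' where st': "turning_state M C (\<lambda>n. - V n) (e + 1) e' t' (x k + real e')"
      and "1 \<le> e'" and bound: "x k + real e' \<le> c * (real e + 2)"
      using turning_state_next[OF st] unfolding c_def by blast
    define y where "y = x(Suc k := x k + real e')"
    have "slow_sequence c (Suc k) y" unfolding y_def
      by (rule slow_sequence_snoc[OF x]) (use \<open>1 \<le> e'\<close> bound last_turn in auto)
    have "0 \<le> x k" using slow_sequence_lower_bound[OF x, of k] x unfolding slow_sequence_def by simp
    moreover have "c * (real e + 2) \<le> 4 * (real e + 2)" using C unfolding c_def by (intro mult_right_mono) auto
    ultimately have "real e' \<le> real (4 * e + 8)" using bound by simp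
    then have "e' + 2 \<le> 2 * 5 ^ Suc k" using e by (simp only: of_nat_le_iff) simp
    moreover have "turning_state M C (\<lambda>n. - V n) (e + 1) e' t' (y (Suc k))"
      using st' unfolding y_def by simp
    moreover have "\<forall>j. Suc k = Suc j \<longrightarrow> y (Suc k) = y j + real e'" unfolding y_def by simp
    ultimately show ?case using \<open>slow_sequence c (Suc k) y\<close> by blast
  qed
  then show ?thesis using order_refl unfolding c_def by blast
qed

theorem no_competitive_search_below_9:
  assumes \<epsilon>: "0 < \<epsilon>" "\<epsilon> \<le> 1" and M: "2 * 5 ^ (nat \<lceil>128/\<epsilon>\<rceil> + nat \<lceil>112/\<epsilon>\<rceil> + 3) \<le> M"
  shows "\<not> competitive_search M (9 - \<epsilon>) W"
proof
  assume "competitive_search M (9 - \<epsilon>) W"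
  then obtain x where "slow_sequence ((9 - \<epsilon> - 1) / 2) (nat \<lceil>128/\<epsilon>\<rceil> + nat \<lceil>112/\<epsilon>\<rceil> + 3) x"
    using turning_sequence[OF _ _ M] \<epsilon> by fastforce
  moreover have "(9 - \<epsilon> - 1) / 2 = 4 - \<epsilon>/2" by simp
  ultimately show False using no_slow_sequence[OF \<epsilon> order_refl] by metis
qed

lemma run_Suc_at_target:
  "last (run A V E w s t k Es n) = t \<Longrightarrow> run A V E w s t k Es (Suc n) = run A V E w s t k Es n"
  by (simp add: Let_def)

lemma run_Suc_step:
  "last (run A V E w s t k Es n) \<noteq> t \<Longrightarrow> run A V E w s t k Es (Suc n)
     = run A V E w s t k Es n @ [A V E w s t k (run A V E w s t k Es n) (revealed Es (run A V E w s t k Es n))]"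
  by (simp add: Let_def)

declare run.simps(2) [simp del]

lemma run_not_Nil: "run A V E w s t k Es n \<noteq> []"
  by (induction n) (simp_all add: run.simps Let_def)

lemma length_run: "last (run A V E w s t k Es n) \<noteq> t \<Longrightarrow> length (run A V E w s t k Es n) = Suc n"
proof (induction n)
  case (Suc n)
  then have "last (run A V E w s t k Es n) \<noteq> t" by (metis run_Suc_at_target)
  then show ?case using Suc.IH run_Suc_step by (metis length_append_singleton)
qed simp

lemma length_run_mono: "m \<le> n \<Longrightarrow> length (run A V E w s t k Es m) \<le> length (run A V E w s t k Es n)"
proof (induction n rule: dec_induct)
  case (step n)
  then show ?case
    by (cases "last (run A V E w s t k Es n) = t")
      (simp_all add: run_Suc_at_target run_Suc_step)
qed simp

lemma set_run: "v \<in> set (run A V E w s t k Es n) \<Longrightarrow> \<exists>i\<le>n. last (run A V E w s t k Es i) = v"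
proof (induction n)
  case (Suc n)
  show ?case
  proof (cases "last (run A V E w s t k Es n) = t")
    case True
    then have "v \<in> set (run A V E w s t k Es n)"
      using Suc.prems by (simp add: run_Suc_at_target)
    then show ?thesis using Suc.IH le_SucI by blast
  next
    case False
    then have "v \<in> set (run A V E w s t k Es n) \<or> v = last (run A V E w s t k Es (Suc n))"
      using Suc.prems by (auto simp: run_Suc_step)
    then show ?thesis using Suc.IH le_SucI by blast
  qed
qed simp

lemma valid_strategy_step:
  assumes "valid_strategy A" "road_map V E s t k Es" "\<forall>e\<in>E. 0 < w e"
    and "last (run A V E w s t k Es n) \<noteq> t"
  shows "{last (run A V E w s t k Es n), last (run A V E w s t k Es (Suc n))}
           \<in> E - revealed Es (run A V E w s t k Es n)"
  using assms run_Suc_step[OF assms(4)] unfolding valid_strategy_def Let_def by simp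

section \<open>The fan\<close>

(* The path 1, ..., 2N + 1 with every vertex joined to the apex 0; in the instance fan_blocked N j
   only the spoke at exit_vertex N j, at distance j from the middle vertex N + 1, is open. *)
definition fan_vertices :: "nat \<Rightarrow> nat set" where
  "fan_vertices N = {0..2 * N + 1}"

definition fan_path :: "nat \<Rightarrow> nat set set" where
  "fan_path N = {{v, Suc v} | v. 1 \<le> v \<and> v \<le> 2 * N}"

definition fan_spokes :: "nat \<Rightarrow> nat set set" where
  "fan_spokes N = {{v, 0} | v. 1 \<le> v \<and> v \<le> 2 * N + 1}"

definition fan_edges :: "nat \<Rightarrow> nat set set" where
  "fan_edges N = fan_path N \<union> fan_spokes N"

definition exit_vertex :: "nat \<Rightarrow> int \<Rightarrow> nat" where
  "exit_vertex N j = nat (int N + 1 + j)"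

definition fan_blocked :: "nat \<Rightarrow> int \<Rightarrow> nat set set" where
  "fan_blocked N j = fan_spokes N - {{exit_vertex N j, 0}}"

lemma spoke_in_fan_spokes: "1 \<le> v \<Longrightarrow> v \<le> 2 * N + 1 \<Longrightarrow> {v, 0} \<in> fan_spokes N"
  unfolding fan_spokes_def by blast

lemma path_edge_in_fan_path:
  "1 \<le> a \<Longrightarrow> 1 \<le> b \<Longrightarrow> a \<le> 2 * N + 1 \<Longrightarrow> b \<le> 2 * N + 1 \<Longrightarrow> b = Suc a \<or> a = Suc b
    \<Longrightarrow> {a, b} \<in> fan_path N"
  unfolding fan_path_def by (auto simp: insert_commute)

lemma apex_notin_fan_path: "e \<in> fan_path N \<Longrightarrow> 0 \<notin> e"
  unfolding fan_path_def by auto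

lemma fan_edge_cases:
  assumes "e \<in> fan_edges N"
  obtains (path) a where "e = {a, Suc a}" "1 \<le> a" "a \<le> 2 * N"
    | (spoke) b where "e = {0, b}" "1 \<le> b" "b \<le> 2 * N + 1"
  using assms unfolding fan_edges_def fan_path_def fan_spokes_def by (auto simp: insert_commute)

lemma fan_edge_to_apex: "{a, 0} \<in> fan_edges N \<Longrightarrow> a \<noteq> 0 \<Longrightarrow> {a, 0} \<in> fan_spokes N"
  unfolding fan_edges_def using apex_notin_fan_path by blast

lemma fan_edge_off_apex: "{a, b} \<in> fan_edges N \<Longrightarrow> a \<noteq> 0 \<Longrightarrow> b \<noteq> 0 \<Longrightarrow> b = Suc a \<or> a = Suc b"
  by (erule fan_edge_cases) (auto simp: doubleton_eq_iff)

lemma exit_vertex: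
  assumes "search_target N j"
  shows "int (exit_vertex N j) = int N + 1 + j" "1 \<le> exit_vertex N j" "exit_vertex N j \<le> 2 * N + 1"
  using assms unfolding exit_vertex_def by auto

lemma is_walk_map_upt:
  assumes "0 < n" "\<And>i. Suc i < n \<Longrightarrow> {f i, f (Suc i)} \<in> F"
  shows "is_walk F (map f [0..<n])"
  using assms unfolding is_walk_def by simp

lemma is_walk_snoc: "is_walk F p \<Longrightarrow> {last p, v} \<in> F \<Longrightarrow> is_walk F (p @ [v])"
  unfolding is_walk_def by (auto simp: nth_append last_conv_nth less_Suc_eq) (metis One_nat_def diff_Suc_1)

lemma unit_walk_cost: "walk_cost (\<lambda>_. 1) p = of_nat (length p - 1)"
  unfolding walk_cost_def by simp

lemma fan_wf_graph: "wf_graph (fan_vertices N) (fan_edges N)"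
  unfolding wf_graph_def fan_vertices_def fan_edges_def fan_path_def fan_spokes_def by fastforce

lemma fan_connected: "connected_graph (fan_vertices N) (fan_edges N)"
  unfolding connected_graph_def connected_in_def
proof (intro ballI)
  fix u v assume "u \<in> fan_vertices N" "v \<in> fan_vertices N"
  then have spoke: "w \<noteq> 0 \<Longrightarrow> {w, 0} \<in> fan_edges N \<and> {0, w} \<in> fan_edges N" if "w \<in> {u, v}" for w
    using that spoke_in_fan_spokes[of w N] unfolding fan_vertices_def fan_edges_def
    by (auto simp: insert_commute)
  define p where "p = (if u = 0 then [] else [u]) @ [0] @ (if v = 0 then [] else [v])"
  have "is_walk (fan_edges N) p"
    unfolding p_def is_walk_def using spoke
    by (auto simp: nth_Cons' nth_append less_Suc_eq split: if_splits)
  moreover have "hd p = u" "last p = v" unfolding p_def by auto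
  ultimately show "\<exists>p. is_walk (fan_edges N) p \<and> hd p = u \<and> last p = v" by blast
qed

definition escape_walk :: "nat \<Rightarrow> int \<Rightarrow> nat list" where
  "escape_walk N j = map (\<lambda>i. nat (int N + 1 + sgn j * int i)) [0..<nat \<bar>j\<bar> + 1] @ [0]"

lemma escape_walk:
  assumes j: "search_target N j"
  shows "is_walk (fan_edges N - fan_blocked N j) (escape_walk N j)"
    "hd (escape_walk N j) = N + 1" "last (escape_walk N j) = 0"
    "length (escape_walk N j) = nat \<bar>j\<bar> + 2"
proof -
  define f where "f i = nat (int N + 1 + sgn j * int i)" for i
  have walk: "escape_walk N j = map f [0..<nat \<bar>j\<bar> + 1] @ [0]"
    unfolding escape_walk_def f_def ..
  then show "length (escape_walk N j) = nat \<bar>j\<bar> + 2" "last (escape_walk N j) = 0"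
    "hd (escape_walk N j) = N + 1"
    by (simp_all add: f_def upt_conv_Cons del: upt_Suc)
  have sgn: "sgn j = 1 \<or> sgn j = -1" using j by (auto simp: sgn_if)
  have "fan_path N \<subseteq> fan_edges N - fan_blocked N j"
    using apex_notin_fan_path unfolding fan_edges_def fan_blocked_def fan_spokes_def by blast
  moreover have "{f i, f (Suc i)} \<in> fan_path N" if "i < nat \<bar>j\<bar>" for i
    using that sgn j by (intro path_edge_in_fan_path) (auto simp: f_def)
  ultimately have "is_walk (fan_edges N - fan_blocked N j) (map f [0..<nat \<bar>j\<bar> + 1])"
    by (intro is_walk_map_upt) auto
  moreover have "last (map f [0..<nat \<bar>j\<bar> + 1]) = exit_vertex N j"
    using j by (cases "0 < j") (auto simp: f_def exit_vertex_def)
  moreover have "{exit_vertex N j, 0} \<in> fan_edges N - fan_blocked N j"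
    using exit_vertex[OF j] spoke_in_fan_spokes unfolding fan_edges_def fan_blocked_def by blast
  ultimately show "is_walk (fan_edges N - fan_blocked N j) (escape_walk N j)"
    unfolding walk by (intro is_walk_snoc) auto
qed

lemma fan_road_map:
  assumes j: "search_target N j"
  shows "road_map (fan_vertices N) (fan_edges N) (N + 1) 0 (2 * N + 1) (fan_blocked N j)"
proof -
  have "fan_blocked N j \<subset> fan_edges N"
    using exit_vertex[OF j] spoke_in_fan_spokes unfolding fan_blocked_def fan_edges_def by blast
  moreover have "card (fan_blocked N j) \<le> 2 * N + 1"
  proof -
    have "fan_spokes N = (\<lambda>v. {v, 0}) ` {1..2 * N + 1}" unfolding fan_spokes_def by auto
    then have "card (fan_spokes N) \<le> 2 * N + 1" using card_image_le[of "{1..2 * N + 1}"] by simp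
    moreover have "finite (fan_spokes N)" using \<open>fan_spokes N = _\<close> by simp
    ultimately show ?thesis unfolding fan_blocked_def by (meson card_Diff1_le le_trans)
  qed
  moreover have "connected_in (fan_edges N - fan_blocked N j) (N + 1) 0"
    unfolding connected_in_def using escape_walk[OF j] by blast
  ultimately show ?thesis
    using fan_wf_graph fan_connected unfolding road_map_def fan_vertices_def by auto
qed

lemma fan_blocked_dist:
  assumes j: "search_target N j"
  shows "1 \<le> blocked_dist (fan_edges N) (\<lambda>_. 1) (fan_blocked N j) (N + 1) 0"
    "blocked_dist (fan_edges N) (\<lambda>_. 1) (fan_blocked N j) (N + 1) 0 \<le> \<bar>j\<bar> + 1"
proof -
  define X where "X = {real_of_rat (walk_cost (\<lambda>_. 1) p) | p.
      is_walk (fan_edges N - fan_blocked N j) p \<and> hd p = N + 1 \<and> last p = 0}"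
  have "walk_cost (\<lambda>_. 1) (escape_walk N j) = of_nat (nat \<bar>j\<bar> + 1)"
    using escape_walk(4)[OF j] by (simp add: unit_walk_cost)
  then have "real_of_rat (walk_cost (\<lambda>_. 1) (escape_walk N j)) = real (nat \<bar>j\<bar> + 1)"
    by (simp only: of_rat_of_nat_eq)
  also have "\<dots> = \<bar>j\<bar> + 1"
    by simp
  finally have cost: "real_of_rat (walk_cost (\<lambda>_. 1) (escape_walk N j)) = \<bar>j\<bar> + 1" .
  have mem: "\<bar>j\<bar> + 1 \<in> X"
    unfolding X_def using escape_walk[OF j] cost by (metis (mono_tags, lifting) mem_Collect_eq)
  have lower: "1 \<le> x" if "x \<in> X" for x
  proof -
    obtain p where p: "x = real_of_rat (walk_cost (\<lambda>_. 1) p)" "p \<noteq> []" "hd p = N + 1" "last p = 0"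
      using \<open>x \<in> X\<close> unfolding X_def is_walk_def by blast
    then have "2 \<le> length p" by (cases p) (auto simp: Suc_le_eq split: if_splits)
    then show ?thesis unfolding p(1) unit_walk_cost by simp
  qed
  show "1 \<le> blocked_dist (fan_edges N) (\<lambda>_. 1) (fan_blocked N j) (N + 1) 0"
    unfolding blocked_dist_def X_def[symmetric] using mem lower by (intro cInf_greatest) auto
  show "blocked_dist (fan_edges N) (\<lambda>_. 1) (fan_blocked N j) (N + 1) 0 \<le> \<bar>j\<bar> + 1"
    unfolding blocked_dist_def X_def[symmetric] using mem lower by (intro cInf_lower bdd_belowI) auto
qed

section \<open>An outerplanar drawing of the fan\<close>

lemma unbounded_component_of_complement:
  fixes K D P :: "'a :: euclidean_space set"
  assumes "2 \<le> DIM('a)" "bounded K" "convex K" "D \<subseteq> K" "P \<inter> interior K = {}"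
  shows "\<exists>C \<in> components (- D). \<not> bounded C \<and> P \<subseteq> closure C"
proof -
  have "\<not> bounded (- K)"
    using assms(2) bounded_Un[of K "- K"] not_bounded_UNIV by (metis Compl_partition)
  then have "- K \<noteq> {}" by auto
  then obtain C where C: "C \<in> components (- D)" "- K \<subseteq> C"
    using exists_component_superset[of "- K" "- D"] connected_complement_bounded_convex[OF assms(2,3,1)]
      assms(4) by blast
  have "\<not> bounded C" using C(2) \<open>\<not> bounded (- K)\<close> bounded_subset by blast
  moreover have "P \<subseteq> closure C"
    using assms(5) closure_mono[OF C(2)] unfolding closure_complement by blast
  ultimately show ?thesis using C(1) by blast
qed

definition fan_point :: "nat \<Rightarrow> complex" where
  "fan_point v = (if v = 0 then \<i> else of_nat v)"

definition fan_arc :: "nat set \<Rightarrow> real \<Rightarrow> complex" where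
  "fan_arc e = linepath (fan_point (Min e)) (fan_point (Max e))"

lemma fan_point_inj: "inj fan_point"
  unfolding fan_point_def inj_def by (auto simp: complex_eq_iff)

lemma fan_point_real: "1 \<le> w \<Longrightarrow> fan_point w = of_nat w"
  unfolding fan_point_def by simp

lemma real_eq_fan_point: "Im z = 0 \<Longrightarrow> Re z = real w \<Longrightarrow> 1 \<le> w \<Longrightarrow> z = fan_point w"
  unfolding fan_point_def by (simp add: complex_eq_iff)

lemma fan_arc_path: "1 \<le> a \<Longrightarrow> fan_arc {a, Suc a} = linepath (of_nat a) (of_nat (Suc a))"
  unfolding fan_arc_def fan_point_def by simp

lemma fan_arc_spoke: "1 \<le> b \<Longrightarrow> fan_arc {0, b} = linepath \<i> (of_nat b)"
  unfolding fan_arc_def fan_point_def by simp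

lemma on_path_segment:
  "z \<in> closed_segment (of_nat a) (of_nat (Suc a)) \<Longrightarrow> Im z = 0 \<and> real a \<le> Re z \<and> Re z \<le> real a + 1"
  unfolding in_segment by (auto simp: algebra_simps)

lemma on_spoke_segment:
  "z \<in> closed_segment \<i> (of_nat b) \<Longrightarrow> 0 \<le> Im z \<and> Im z \<le> 1 \<and> Re z = (1 - Im z) * real b"
  unfolding in_segment by auto

lemma fan_arc_vertex:
  assumes "e \<in> fan_edges N" "fan_point w \<in> path_image (fan_arc e)"
  shows "w \<in> e"
  using assms(1)
proof (cases rule: fan_edge_cases)
  case (path a)
  then have "Im (fan_point w) = 0 \<and> real a \<le> Re (fan_point w) \<and> Re (fan_point w) \<le> real a + 1"
    using assms(2) on_path_segment by (simp add: fan_arc_path)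
  then show ?thesis using path by (cases "w = 0") (auto simp: fan_point_def)
next
  case (spoke b)
  then have "0 \<le> Im (fan_point w) \<and> Re (fan_point w) = (1 - Im (fan_point w)) * real b"
    using assms(2) on_spoke_segment by (simp add: fan_arc_spoke)
  then show ?thesis using spoke by (cases "w = 0") (auto simp: fan_point_def)
qed

lemma fan_arc_ends:
  assumes "e \<in> fan_edges N"
  shows "arc (fan_arc e) \<and> {pathstart (fan_arc e), pathfinish (fan_arc e)} = fan_point ` e"
  using assms
proof (cases rule: fan_edge_cases)
  case (path a)
  then show ?thesis by (simp add: fan_arc_path fan_point_real)
next
  case (spoke b)
  then show ?thesis by (auto simp: fan_arc_spoke fan_point_def complex_eq_iff)
qed

lemma fan_edge_subset_vertices: "e \<in> fan_edges N \<Longrightarrow> e \<subseteq> fan_vertices N"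
  by (cases rule: fan_edge_cases) (auto simp: fan_vertices_def)

lemma fan_arc_vertices:
  assumes "e \<in> fan_edges N"
  shows "path_image (fan_arc e) \<inter> fan_point ` fan_vertices N = fan_point ` e"
proof -
  have "fan_point ` e \<subseteq> path_image (fan_arc e)"
    using fan_arc_ends[OF assms] pathstart_in_path_image[of "fan_arc e"]
      pathfinish_in_path_image[of "fan_arc e"] by (metis empty_subsetI insert_subset)
  moreover have "e \<subseteq> fan_vertices N"
    using assms by (rule fan_edge_subset_vertices)
  ultimately show ?thesis using fan_arc_vertex[OF assms] by blast
qed

lemma path_spoke_crossing:
  assumes "z \<in> closed_segment (of_nat a) (of_nat (Suc a))" "z \<in> closed_segment \<i> (of_nat b)" "1 \<le> b"
  shows "z = fan_point b"
proof -
  have "Im z = 0" using on_path_segment[OF assms(1)] by simp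
  then show ?thesis using on_spoke_segment[OF assms(2)] assms(3) by (intro real_eq_fan_point) auto
qed

lemma fan_arcs_cross_at_vertex:
  assumes e: "e \<in> fan_edges N" and e': "e' \<in> fan_edges N" and "e \<noteq> e'"
    and z: "z \<in> path_image (fan_arc e)" "z \<in> path_image (fan_arc e')"
  shows "\<exists>w. z = fan_point w"
  using e
proof (cases rule: fan_edge_cases)
  case (path a)
  have za: "z \<in> closed_segment (of_nat a) (of_nat (Suc a))" using z(1) path by (simp add: fan_arc_path)
  show ?thesis using e'
  proof (cases rule: fan_edge_cases)
    case (path a')
    have "a \<noteq> a'" using \<open>e \<noteq> e'\<close> path \<open>e = {a, Suc a}\<close> by auto
    moreover have z': "Im z = 0 \<and> real a' \<le> Re z \<and> Re z \<le> real a' + 1"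
      using z(2) path on_path_segment by (simp add: fan_arc_path)
    moreover note on_path_segment[OF za]
    ultimately have "Re z = real (max a a')"
      by (cases "a < a'") (auto simp: max_def)
    then show ?thesis using z' real_eq_fan_point \<open>1 \<le> a\<close> by (metis le_max_iff_disj)
  next
    case (spoke b)
    then show ?thesis using path_spoke_crossing[OF za] z(2) by (auto simp: fan_arc_spoke)
  qed
next
  case (spoke b)
  have zb: "z \<in> closed_segment \<i> (of_nat b)" using z(1) spoke by (simp add: fan_arc_spoke)
  show ?thesis using e'
  proof (cases rule: fan_edge_cases)
    case (path a)
    then show ?thesis using path_spoke_crossing[OF _ zb] z(2) spoke by (auto simp: fan_arc_path)
  next
    case (spoke b')
    have "b \<noteq> b'" using \<open>e \<noteq> e'\<close> spoke \<open>e = {0, b}\<close> by auto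
    moreover have "Re z = (1 - Im z) * real b'"
      using z(2) spoke on_spoke_segment by (simp add: fan_arc_spoke)
    moreover note on_spoke_segment[OF zb]
    ultimately have "Im z = 1" "Re z = 0" by auto
    then show ?thesis by (intro exI[of _ 0]) (simp add: fan_point_def complex_eq_iff)
  qed
qed

lemma outerplanar_fan: "outerplanar (fan_vertices N) (fan_edges N)"
  unfolding outerplanar_def
proof (intro exI[of _ fan_point] exI[of _ fan_arc] conjI ballI impI)
  show "inj_on fan_point (fan_vertices N)" using fan_point_inj by (rule inj_on_subset) simp
next
  fix e assume "e \<in> fan_edges N"
  then show "arc (fan_arc e)" "{pathstart (fan_arc e), pathfinish (fan_arc e)} = fan_point ` e"
    "path_image (fan_arc e) \<inter> fan_point ` fan_vertices N = fan_point ` e"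
    using fan_arc_ends fan_arc_vertices by blast+
next
  fix e e' assume "e \<in> fan_edges N" "e' \<in> fan_edges N" "e \<noteq> e'"
  then show "path_image (fan_arc e) \<inter> path_image (fan_arc e') \<subseteq> fan_point ` (e \<inter> e')"
    using fan_arcs_cross_at_vertex fan_arc_vertex by (blast intro: image_eqI)
next
  define K where "K = cbox 0 (Complex (2 * real N + 2) 1)"
  have points: "fan_point ` fan_vertices N \<subseteq> K"
    unfolding K_def fan_vertices_def fan_point_def cbox_complex_eq by auto
  have "path_image (fan_arc e) \<subseteq> K" if "e \<in> fan_edges N" for e
  proof -
    have "finite e \<and> e \<noteq> {}" using that by (cases rule: fan_edge_cases) auto
    then have "Min e \<in> fan_vertices N" "Max e \<in> fan_vertices N"
      using fan_edge_subset_vertices[OF that] Min_in Max_in by blast+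
    then show ?thesis
      unfolding fan_arc_def path_image_linepath K_def
      using points by (intro closed_segment_subset) (auto simp: K_def)
  qed
  moreover have "fan_point ` fan_vertices N \<inter> interior K = {}"
    unfolding K_def interior_cbox box_complex_eq fan_point_def by auto
  ultimately show "let D = fan_point ` fan_vertices N \<union> (\<Union>e\<in>fan_edges N. path_image (fan_arc e))
      in \<exists>C\<in>components (- D). \<not> bounded C \<and> fan_point ` fan_vertices N \<subseteq> closure C"
    unfolding Let_def using points
    by (intro unbounded_component_of_complement[of K]) (auto simp: K_def)
qed

section \<open>Strategies on the fan as linear searches\<close>

abbreviation fan_run :: "strategy \<Rightarrow> nat \<Rightarrow> nat set set \<Rightarrow> nat \<Rightarrow> nat list" where
  "fan_run A N Es n \<equiv> run A (fan_vertices N) (fan_edges N) (\<lambda>_. 1) (N + 1) 0 (2 * N + 1) Es n"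

abbreviation fan_ratio :: "strategy \<Rightarrow> nat \<Rightarrow> int \<Rightarrow> nat \<Rightarrow> real" where
  "fan_ratio A N j n \<equiv> real_of_rat (walk_cost (\<lambda>_. 1) (fan_run A N (fan_blocked N j) n))
     / blocked_dist (fan_edges N) (\<lambda>_. 1) (fan_blocked N j) (N + 1) 0"

(* The position of a traveller who finds every spoke blocked.  Since a spoke is revealed only at
   its path end, on fan_blocked N j the traveller follows the same walk until the exit vertex. *)
definition fan_walk :: "strategy \<Rightarrow> nat \<Rightarrow> nat \<Rightarrow> int" where
  "fan_walk A N n = int (last (fan_run A N (fan_spokes N) n)) - int (N + 1)"

lemma revealed_fan_blocked:
  "exit_vertex N j \<notin> set L \<Longrightarrow> 0 \<notin> set L \<Longrightarrow> revealed (fan_blocked N j) L = revealed (fan_spokes N) L"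
  unfolding revealed_def fan_blocked_def by auto

lemma valid_fan_move:
  assumes valid: "valid_strategy A" and j: "search_target N j"
    and away: "last (fan_run A N (fan_blocked N j) n) \<notin> {0, exit_vertex N j}"
  defines "v \<equiv> last (fan_run A N (fan_blocked N j) n)" and "v' \<equiv> last (fan_run A N (fan_blocked N j) (Suc n))"
  shows "v' \<noteq> 0" "v' = Suc v \<or> v = Suc v'"
proof -
  let ?L = "fan_run A N (fan_blocked N j) n"
  have move: "{v, v'} \<in> fan_edges N - revealed (fan_blocked N j) ?L"
    using valid_strategy_step[OF valid fan_road_map[OF j]] away unfolding v_def v'_def by simp
  have spoke_revealed: "{v, 0} \<in> revealed (fan_blocked N j) ?L" if "{v, 0} \<in> fan_edges N"
    using that fan_edge_to_apex[of v N] away last_in_set[OF run_not_Nil]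
    unfolding v_def revealed_def fan_blocked_def by (auto simp: doubleton_eq_iff)
  show "v' \<noteq> 0"
  proof
    assume "v' = 0"
    then show False using move spoke_revealed by simp
  qed
  then show "v' = Suc v \<or> v = Suc v'"
    using fan_edge_off_apex move away unfolding v_def by blast
qed

lemma fan_walk_exit_iff:
  assumes "search_target N j"
  shows "fan_walk A N n = j \<longleftrightarrow> last (fan_run A N (fan_spokes N) n) = exit_vertex N j"
  unfolding fan_walk_def using exit_vertex(1)[OF assms] by auto

lemma fan_run_before_exit:
  assumes valid: "valid_strategy A" and j: "search_target N j" and before: "\<forall>i<m. fan_walk A N i \<noteq> j"
  shows "fan_run A N (fan_blocked N j) m = fan_run A N (fan_spokes N) m \<and> 0 \<notin> set (fan_run A N (fan_spokes N) m)"
  using before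
proof (induction m)
  case (Suc m)
  let ?L = "fan_run A N (fan_spokes N) m"
  have same: "fan_run A N (fan_blocked N j) m = ?L" and "0 \<notin> set ?L"
    using Suc by auto
  have "exit_vertex N j \<notin> set ?L"
    using set_run[of "exit_vertex N j"] Suc.prems fan_walk_exit_iff[OF j] by (metis le_imp_less_Suc)
  moreover have "last ?L \<in> set ?L" by (rule last_in_set[OF run_not_Nil])
  ultimately have last: "last ?L \<notin> {0, exit_vertex N j}"
    using \<open>0 \<notin> set ?L\<close> by fastforce
  have "revealed (fan_blocked N j) ?L = revealed (fan_spokes N) ?L"
    using \<open>exit_vertex N j \<notin> set ?L\<close> \<open>0 \<notin> set ?L\<close> by (rule revealed_fan_blocked)
  then have "fan_run A N (fan_blocked N j) (Suc m) = fan_run A N (fan_spokes N) (Suc m)"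
    using same last by (simp add: run_Suc_step)
  moreover have "last (fan_run A N (fan_blocked N j) m) \<notin> {0, exit_vertex N j}"
    using last same by simp
  then have "last (fan_run A N (fan_blocked N j) (Suc m)) \<noteq> 0"
    by (rule valid_fan_move(1)[OF valid j])
  ultimately show ?case
    using \<open>0 \<notin> set ?L\<close> last by (simp add: run_Suc_step)
qed simp

lemma fan_walk_unit_step:
  assumes valid: "valid_strategy A" and j: "search_target N j" and new: "j \<notin> fan_walk A N ` {..n}"
  shows "\<bar>fan_walk A N (Suc n) - fan_walk A N n\<bar> = 1"
proof -
  have "\<forall>i<Suc n. fan_walk A N i \<noteq> j" "\<forall>i<n. fan_walk A N i \<noteq> j"
    using new by auto
  then have same: "fan_run A N (fan_blocked N j) n = fan_run A N (fan_spokes N) n"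
    "fan_run A N (fan_blocked N j) (Suc n) = fan_run A N (fan_spokes N) (Suc n)"
    and no_apex: "0 \<notin> set (fan_run A N (fan_spokes N) n)"
    using fan_run_before_exit[OF valid j] by blast+
  have "last (fan_run A N (fan_spokes N) n) \<noteq> exit_vertex N j"
    using new fan_walk_exit_iff[OF j, of A n] by blast
  moreover have "last (fan_run A N (fan_spokes N) n) \<noteq> 0"
    using no_apex last_in_set[OF run_not_Nil] by metis
  ultimately have "last (fan_run A N (fan_blocked N j) n) \<notin> {0, exit_vertex N j}"
    using same(1) by simp
  from valid_fan_move(2)[OF valid j this] show ?thesis
    using same unfolding fan_walk_def by auto
qed

lemma fan_walk_reaches_exit:
  assumes valid: "valid_strategy A" and j: "search_target N j"
    and reached: "last (fan_run A N (fan_blocked N j) n) = 0"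
  shows "\<exists>m. fan_walk A N m = j \<and> m + 2 \<le> length (fan_run A N (fan_blocked N j) n)"
proof -
  have "\<not> (\<forall>i<n. fan_walk A N i \<noteq> j)"
  proof
    assume "\<forall>i<n. fan_walk A N i \<noteq> j"
    then have "0 \<notin> set (fan_run A N (fan_blocked N j) n)"
      using fan_run_before_exit[OF valid j] by simp
    then show False using reached last_in_set[OF run_not_Nil] by metis
  qed
  then obtain i where "i < n" "fan_walk A N i = j" by blast
  define m where "m = first_visit (fan_walk A N) j"
  have "m < n" using first_visit_le[of "fan_walk A N" i j] \<open>i < n\<close> \<open>fan_walk A N i = j\<close>
    unfolding m_def by simp
  have "fan_walk A N m = j"
    unfolding m_def first_visit_def by (rule LeastI) (rule \<open>fan_walk A N i = j\<close>)
  moreover have "fan_run A N (fan_blocked N j) m = fan_run A N (fan_spokes N) m"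
    using fan_run_before_exit[OF valid j, of m] not_before_first_visit[of _ "fan_walk A N" j]
    unfolding m_def by blast
  ultimately have "last (fan_run A N (fan_blocked N j) m) = exit_vertex N j"
    using fan_walk_exit_iff[OF j] by simp
  then have "length (fan_run A N (fan_blocked N j) (Suc m)) = m + 2"
    using exit_vertex(2)[OF j] length_run[of A _ _ _ _ 0 _ _ m] by (simp add: run_Suc_step)
  then show ?thesis
    using \<open>fan_walk A N m = j\<close> \<open>m < n\<close> length_run_mono[of "Suc m" n] by (metis Suc_leI)
qed

lemma competitive_fan_walk:
  assumes valid: "valid_strategy A" and C: "0 \<le> C"
    and fast: "\<And>j. search_target N j \<Longrightarrow> \<exists>n. last (fan_run A N (fan_blocked N j) n) = 0 \<and>
       fan_ratio A N j n \<le> C"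
  shows "competitive_search N C (fan_walk A N)"
  unfolding competitive_search_def
proof (intro conjI allI impI)
  show "fan_walk A N 0 = 0" by (simp add: fan_walk_def)
next
  fix n assume "\<exists>j. search_target N j \<and> j \<notin> fan_walk A N ` {..n}"
  then obtain j where "search_target N j" "j \<notin> fan_walk A N ` {..n}" by blast
  then show "\<bar>fan_walk A N (Suc n) - fan_walk A N n\<bar> = 1"
    by (intro fan_walk_unit_step[OF valid])
next
  fix j assume j: "search_target N j"
  define L where "L n = fan_run A N (fan_blocked N j) n" for n
  define d where "d = blocked_dist (fan_edges N) (\<lambda>_. 1) (fan_blocked N j) (N + 1) 0"
  obtain n where reached: "last (L n) = 0" and ratio: "real_of_rat (walk_cost (\<lambda>_. 1) (L n)) / d \<le> C"
    using fast[OF j] unfolding L_def d_def by blast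
  obtain m where m: "fan_walk A N m = j" "m + 2 \<le> length (L n)"
    using fan_walk_reaches_exit[OF valid j] reached unfolding L_def by blast
  have d: "1 \<le> d" "d \<le> \<bar>j\<bar> + 1" using fan_blocked_dist[OF j] unfolding d_def by auto
  have "real m + 1 \<le> real (length (L n) - 1)" using m(2) by linarith
  also have "\<dots> = real_of_rat (walk_cost (\<lambda>_. 1) (L n))"
    by (simp only: unit_walk_cost of_rat_of_nat_eq)
  also have "\<dots> \<le> C * d" using ratio d(1) by (simp add: pos_divide_le_eq)
  also have "\<dots> \<le> C * (real_of_int \<bar>j\<bar> + 1)" using d(2) C by (intro mult_left_mono) simp_all
  finally show "\<exists>n. fan_walk A N n = j \<and> real n + 1 \<le> C * (real_of_int \<bar>j\<bar> + 1)"
    using m(1) by blast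
qed

lemma fan_hard_instance:
  assumes valid: "valid_strategy A" and C: "0 \<le> C" and slow: "\<not> competitive_search N C (fan_walk A N)"
  shows "\<exists>j. search_target N j \<and> (\<forall>n. last (fan_run A N (fan_blocked N j) n) = 0 \<longrightarrow>
       fan_ratio A N j n > C)"
proof (rule ccontr)
  assume "\<not> ?thesis"
  then have "\<exists>n. last (fan_run A N (fan_blocked N j) n) = 0 \<and>
       fan_ratio A N j n \<le> C"
    if "search_target N j" for j
    using that not_less by blast
  then show False using competitive_fan_walk[OF valid C] slow by blast
qed

theorem theorem2:
  fixes \<epsilon> :: real and A :: strategy
  assumes "\<epsilon> > 0" and "valid_strategy A"
  shows "\<exists>V E s t Es k. outerplanar V E \<and> road_map V E s t k Es \<and>
           (\<forall>n. last (run A V E (\<lambda>_. 1) s t k Es n) = t \<longrightarrow>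
              real_of_rat (walk_cost (\<lambda>_. 1) (run A V E (\<lambda>_. 1) s t k Es n))
                / blocked_dist E (\<lambda>_. 1) Es s t > 9 - \<epsilon>)"
proof -
  define \<delta> where "\<delta> = min \<epsilon> 1"
  have \<delta>: "0 < \<delta>" "\<delta> \<le> 1" "\<delta> \<le> \<epsilon>" using assms(1) unfolding \<delta>_def by auto
  define N :: nat where "N = 2 * 5 ^ (nat \<lceil>128/\<delta>\<rceil> + nat \<lceil>112/\<delta>\<rceil> + 3)"
  have "\<not> competitive_search N (9 - \<delta>) (fan_walk A N)"
    using no_competitive_search_below_9[OF \<delta>(1,2)] unfolding N_def by blast
  then obtain j where j: "search_target N j"
    and hard: "\<forall>n. last (fan_run A N (fan_blocked N j) n) = 0 \<longrightarrow> fan_ratio A N j n > 9 - \<delta>"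
    using fan_hard_instance[OF assms(2), of "9 - \<delta>"] \<delta> by auto
  moreover have "9 - \<epsilon> \<le> 9 - \<delta>" using \<delta>(3) by simp
  ultimately have "\<forall>n. last (fan_run A N (fan_blocked N j) n) = 0 \<longrightarrow> fan_ratio A N j n > 9 - \<epsilon>"
    by (meson order_le_less_trans)
  then show ?thesis using outerplanar_fan fan_road_map[OF \<open>search_target N j\<close>] by blast
qed

end
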